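(* Let $X,Y,Z$ be random variables on finite alphabets $\mathcal{X},\mathcal{Y},\mathcal{Z}$. For each $y\in\mathcal{Y}$ with $\Pr(Y=y)>0$, let $(A_y,B_y,C_y)$ be the random triple on $\mathcal{X}\times\mathcal{Y}\times\mathcal{Z}$ with $$\Pr(A_y=x,B_y=y',C_y=z)=\begin{cases}0 & \text{if } \Pr(Z=z)=0,\\ \dfrac{\Pr(X=x,Y=y',Z=z)\,\Pr(Z=z\mid Y=y)}{\Pr(Z=z)} & \text{otherwise.}\end{cases}$$ Let $A_{Z|Y}$ be the random variable on $\mathcal{X}$ with $\Pr(A_{Z|Y}=x)=\sum_{y:\Pr(Y=y)>0}\Pr(Y=y)\Pr(A_y=x)$. Then $H(A_{Z|Y})=H(X)$.
   Context: $H$ denotes Shannon entropy. *)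

theory Defs
  imports "HOL-Probability.Probability"
begin

definition shannon_entropy :: "('a::finite \<Rightarrow> real) \<Rightarrow> real" where
  "shannon_entropy f = - (\<Sum>x | f x \<noteq> 0. f x * log 2 (f x))"

definition pX :: "('x::finite \<times> 'y::finite \<times> 'z::finite) pmf \<Rightarrow> 'x \<Rightarrow> real" where
  "pX P x = (\<Sum>y\<in>UNIV. \<Sum>z\<in>UNIV. pmf P (x, y, z))"

definition pY :: "('x::finite \<times> 'y::finite \<times> 'z::finite) pmf \<Rightarrow> 'y \<Rightarrow> real" where
  "pY P y = (\<Sum>x\<in>UNIV. \<Sum>z\<in>UNIV. pmf P (x, y, z))"

definition pZ :: "('x::finite \<times> 'y::finite \<times> 'z::finite) pmf \<Rightarrow> 'z \<Rightarrow> real" where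
  "pZ P z = (\<Sum>x\<in>UNIV. \<Sum>y\<in>UNIV. pmf P (x, y, z))"

definition pYZ :: "('x::finite \<times> 'y::finite \<times> 'z::finite) pmf \<Rightarrow> 'y \<Rightarrow> 'z \<Rightarrow> real" where
  "pYZ P y z = (\<Sum>x\<in>UNIV. pmf P (x, y, z))"

text \<open>Pr(Z = z | Y = y), used only when Pr(Y = y) > 0.\<close>
definition condZY :: "('x::finite \<times> 'y::finite \<times> 'z::finite) pmf \<Rightarrow> 'z \<Rightarrow> 'y \<Rightarrow> real" where
  "condZY P z y = pYZ P y z / pY P y"

definition A_triple :: "('x::finite \<times> 'y::finite \<times> 'z::finite) pmf \<Rightarrow> 'y \<Rightarrow> 'x \<Rightarrow> 'y \<Rightarrow> 'z \<Rightarrow> real" where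
  "A_triple P y x y' z =
     (if pZ P z = 0 then 0 else pmf P (x, y', z) * condZY P z y / pZ P z)"

definition A_marg :: "('x::finite \<times> 'y::finite \<times> 'z::finite) pmf \<Rightarrow> 'y \<Rightarrow> 'x \<Rightarrow> real" where
  "A_marg P y x = (\<Sum>y'\<in>UNIV. \<Sum>z\<in>UNIV. A_triple P y x y' z)"

definition A_ZY :: "('x::finite \<times> 'y::finite \<times> 'z::finite) pmf \<Rightarrow> 'x \<Rightarrow> real" where
  "A_ZY P x = (\<Sum>y | pY P y > 0. pY P y * A_marg P y x)"

end

theory Submission
  imports Defs
begin

(* Mixing the conditional laws Pr(Z = z | Y = y)
  over Pr(Y = y) gives back Pr(Z = z); this cancels the denominator Pr(Z = z) in the
  definition of (A_y, B_y, C_y), leaving the x-marginal of P. *)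

lemma pY_nonneg: "pY P y \<ge> 0"
  unfolding pY_def by (simp add: sum_nonneg)

lemma pYZ_le_pY: "pYZ P y z \<le> pY P y"
  unfolding pY_def pYZ_def
  by (intro sum_mono member_le_sum) auto

lemma pmf_le_pZ: "pmf P (x, y, z) \<le> pZ P z"
proof -
  have "pmf P (x, y, z) \<le> (\<Sum>y'\<in>UNIV. pmf P (x, y', z))"
    by (rule member_le_sum) auto
  also have "\<dots> \<le> pZ P z"
    unfolding pZ_def by (rule member_le_sum) (auto intro: sum_nonneg)
  finally show ?thesis .
qed

lemma pY_mult_condZY: "pY P y * condZY P z y = pYZ P y z"
proof (cases "pY P y = 0")
  case True
  have "0 \<le> pYZ P y z"
    unfolding pYZ_def by (simp add: sum_nonneg)
  with True pYZ_le_pY[of P y z] show ?thesis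
    by simp
qed (simp add: condZY_def)

lemma sum_pY_mult_condZY: "(\<Sum>y\<in>UNIV. pY P y * condZY P z y) = pZ P z"
  unfolding pY_mult_condZY pYZ_def pZ_def by (rule sum.swap)

lemma pmf_div_pZ_mult_pZ: "pmf P (x, y, z) / pZ P z * pZ P z = pmf P (x, y, z)"
  using pmf_le_pZ[of P x y z] pmf_nonneg[of P "(x, y, z)"] by auto

(* The case split in A_triple is absorbed by the convention x / 0 = 0. *)
lemma A_triple_eq: "A_triple P y x y' z = pmf P (x, y', z) / pZ P z * condZY P z y"
  by (simp add: A_triple_def)

lemma A_ZY_eq_sum_UNIV: "A_ZY P x = (\<Sum>y\<in>UNIV. pY P y * A_marg P y x)"
  unfolding A_ZY_def
  by (rule sum.mono_neutral_left) (use pY_nonneg[of P] in \<open>auto simp: le_less\<close>)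

lemma A_ZY_eq_pX: "A_ZY P = pX P"
proof
  fix x
  have "A_ZY P x =
      (\<Sum>y\<in>UNIV. \<Sum>y'\<in>UNIV. \<Sum>z\<in>UNIV. pmf P (x, y', z) / pZ P z * (pY P y * condZY P z y))"
    unfolding A_ZY_eq_sum_UNIV A_marg_def A_triple_eq sum_distrib_left
    by (simp add: ac_simps)
  also have "\<dots> =
      (\<Sum>y'\<in>UNIV. \<Sum>z\<in>UNIV. pmf P (x, y', z) / pZ P z * (\<Sum>y\<in>UNIV. pY P y * condZY P z y))"
    unfolding sum_distrib_left
    by (subst sum.swap) (intro sum.cong refl sum.swap)
  also have "\<dots> = pX P x"
    unfolding sum_pY_mult_condZY pmf_div_pZ_mult_pZ pX_def ..
  finally show "A_ZY P x = pX P x" .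
qed

theorem lemma2:
  fixes P :: "('x::finite \<times> 'y::finite \<times> 'z::finite) pmf"
  shows "shannon_entropy (A_ZY P) = shannon_entropy (pX P)"
  by (simp add: A_ZY_eq_pX)

end
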